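(* Let $R$ be a unital ring, and let $S\subseteq R$ be a subring with $1\in S$ such that $S$ is generated by its commutators (so that $\xi(S)$ is defined). Then $\xi(R)\leq 15\,\xi(S)^3$; that is, every element of $R$ is a sum of $15\,\xi(S)^3$ elements of the form $[b,c][d,e]$ with $b,c,d,e\in R$.
   Context: $[x,y]=xy-yx$. For a unital ring $T$ generated by its commutators (as an ideal, equivalently as a ring), $\xi(T)$ is the minimal $N\in\mathbb{N}$ such that every element of $T$ is a sum of $N$ elements of the form $[b,c][d,e]$ with $b,c,d,e\in T$. *)

theory Defs
  imports Main
begin

definition comm :: "'a::ring_1 \<Rightarrow> 'a \<Rightarrow> 'a" where
  "comm x y = x * y - y * x"

definition unital_subring :: "'a::ring_1 set \<Rightarrow> bool" where
  "unital_subring S \<longleftrightarrow> 0 \<in> S \<and> 1 \<in> S \<and>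
     (\<forall>x\<in>S. \<forall>y\<in>S. x + y \<in> S \<and> x * y \<in> S) \<and> (\<forall>x\<in>S. - x \<in> S)"

definition commutator_ideal :: "'a::ring_1 set \<Rightarrow> 'a set" where
  "commutator_ideal S = {\<Sum>i<n. x i * comm (a i) (b i) * y i | (n::nat) x a b y.
       \<forall>i<n. x i \<in> S \<and> a i \<in> S \<and> b i \<in> S \<and> y i \<in> S}"

definition generated_by_commutators :: "'a::ring_1 set \<Rightarrow> bool" where
  "generated_by_commutators S \<longleftrightarrow> commutator_ideal S = S"

definition sum_of_comm_products :: "'a::ring_1 set \<Rightarrow> nat \<Rightarrow> bool" where
  "sum_of_comm_products S N \<longleftrightarrow> (\<forall>z\<in>S. \<exists>b c d e :: nat \<Rightarrow> 'a.
      (\<forall>i<N. b i \<in> S \<and> c i \<in> S \<and> d i \<in> S \<and> e i \<in> S) \<and>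
      z = (\<Sum>i<N. comm (b i) (c i) * comm (d i) (e i)))"

definition xi :: "'a::ring_1 set \<Rightarrow> nat" where
  "xi S = (LEAST N. sum_of_comm_products S N)"

end

theory Submission
  imports Defs
begin

text \<open>Let n = xi(S) and write 1 as a sum of n products [b_i,c_i][d_i,e_i] with entries in S;
  expand each e_i in the same way. A commutator [x,y] = x 1 y - y 1 x is then a sum of 9n
  products of two commutators (a nine-term identity for each summand), and
  r = \<Sum> [b_i,c_i][d_i,e_i] r differs from a single commutator [M,r] by 4n^2 such
  products. So every element of R is a sum of 9n + 4n^2 \<le> 15n^3 products.

  That xi(S) is a finite minimum needs an argument of its own: the elements z for which all
  x z y (x, y \<in> S) are sums of a uniformly bounded number of products form an ideal of S
  containing w S w for every w = x[a,b]y. As 1 is a finite sum of such w, some power of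
  that sum, namely 1, lies in the ideal.\<close>

definition comm_prod_sum :: "'a::ring_1 set \<Rightarrow> nat \<Rightarrow> 'a \<Rightarrow> bool" where
  "comm_prod_sum A N z \<longleftrightarrow> (\<exists>b c d e :: nat \<Rightarrow> 'a.
      (\<forall>i<N. b i \<in> A \<and> c i \<in> A \<and> d i \<in> A \<and> e i \<in> A) \<and>
      z = (\<Sum>i<N. comm (b i) (c i) * comm (d i) (e i)))"

lemma sum_of_comm_products_iff: "sum_of_comm_products A N \<longleftrightarrow> (\<forall>z\<in>A. comm_prod_sum A N z)"
  by (simp add: sum_of_comm_products_def comm_prod_sum_def)

lemma comm_prod_sum_0: "comm_prod_sum A 0 0"
  unfolding comm_prod_sum_def by auto

lemma comm_prod_sum_single:
  "b \<in> A \<Longrightarrow> c \<in> A \<Longrightarrow> d \<in> A \<Longrightarrow> e \<in> A \<Longrightarrow> comm_prod_sum A 1 (comm b c * comm d e)"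
  unfolding comm_prod_sum_def by (intro exI[of _ "\<lambda>_. _"]) simp

lemma comm_prod_sum_subset: "comm_prod_sum A N z \<Longrightarrow> A \<subseteq> B \<Longrightarrow> comm_prod_sum B N z"
  unfolding comm_prod_sum_def by blast

lemma comm_prod_sum_uminus:
  assumes "comm_prod_sum A N z"
  shows "comm_prod_sum A N (- z)"
proof -
  obtain b c d e where A: "\<forall>i<N. b i \<in> A \<and> c i \<in> A \<and> d i \<in> A \<and> e i \<in> A"
    and z: "z = (\<Sum>i<N. comm (b i) (c i) * comm (d i) (e i))"
    using assms unfolding comm_prod_sum_def by blast
  have "- z = (\<Sum>i<N. comm (c i) (b i) * comm (d i) (e i))"
    unfolding z sum_negf[symmetric] by (simp add: comm_def algebra_simps)
  then show ?thesis
    unfolding comm_prod_sum_def using A by blast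
qed

lemma sum_lessThan_add:
  fixes f :: "nat \<Rightarrow> 'b::comm_monoid_add"
  shows "(\<Sum>i<N + M. f i) = (\<Sum>i<N. f i) + (\<Sum>i<M. f (N + i))"
  by (induction M) (simp_all add: add.assoc)

lemma comm_prod_sum_add:
  assumes "comm_prod_sum A N z" and "comm_prod_sum A M z'"
  shows "comm_prod_sum A (N + M) (z + z')"
proof -
  obtain b c d e where A: "\<forall>i<N. b i \<in> A \<and> c i \<in> A \<and> d i \<in> A \<and> e i \<in> A"
    and z: "z = (\<Sum>i<N. comm (b i) (c i) * comm (d i) (e i))"
    using assms(1) unfolding comm_prod_sum_def by blast
  obtain b' c' d' e' where A': "\<forall>i<M. b' i \<in> A \<and> c' i \<in> A \<and> d' i \<in> A \<and> e' i \<in> A"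
    and z': "z' = (\<Sum>i<M. comm (b' i) (c' i) * comm (d' i) (e' i))"
    using assms(2) unfolding comm_prod_sum_def by blast
  define join :: "(nat \<Rightarrow> 'a) \<Rightarrow> (nat \<Rightarrow> 'a) \<Rightarrow> nat \<Rightarrow> 'a"
    where "join f g i = (if i < N then f i else g (i - N))" for f g i
  let ?t = "\<lambda>i. comm (join b b' i) (join c c' i) * comm (join d d' i) (join e e' i)"
  have "(\<Sum>i<N. ?t i) = z"
    unfolding z by (rule sum.cong) (auto simp: join_def)
  moreover have "(\<Sum>i<M. ?t (N + i)) = z'"
    unfolding z' by (simp add: join_def)
  ultimately have "(\<Sum>i<N + M. ?t i) = z + z'"
    by (simp only: sum_lessThan_add)
  moreover have "\<forall>i<N + M. join b b' i \<in> A \<and> join c c' i \<in> A \<and> join d d' i \<in> A \<and> join e e' i \<in> A"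
    using A A' by (auto simp: join_def)
  ultimately show ?thesis
    unfolding comm_prod_sum_def by (intro exI[of _ "join b b'"] exI[of _ "join c c'"]
      exI[of _ "join d d'"] exI[of _ "join e e'"]) simp
qed

lemma comm_prod_sum_diff:
  "comm_prod_sum A N z \<Longrightarrow> comm_prod_sum A M z' \<Longrightarrow> comm_prod_sum A (N + M) (z - z')"
  using comm_prod_sum_add[of A N z M "- z'"] comm_prod_sum_uminus[of A M z'] by simp

lemma comm_prod_sum_sum:
  "(\<And>i. i < n \<Longrightarrow> comm_prod_sum A N (f i)) \<Longrightarrow> comm_prod_sum A (n * N) (\<Sum>i<n. f i)"
proof (induction n)
  case 0
  then show ?case by (simp add: comm_prod_sum_0)
next
  case (Suc n)
  then have "comm_prod_sum A (n * N + N) ((\<Sum>i<n. f i) + f n)"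
    by (intro comm_prod_sum_add) auto
  then show ?case by (simp add: add.commute)
qed

lemma comm_prod_sum_mono:
  assumes "comm_prod_sum A N z" and "N \<le> M" and "0 \<in> A"
  shows "comm_prod_sum A M z"
proof -
  have "comm_prod_sum A 1 (comm 0 0 * comm 0 0)"
    by (intro comm_prod_sum_single assms(3))
  then have "comm_prod_sum A (M - N) 0"
    using comm_prod_sum_sum[of "M - N" A 1 "\<lambda>_. 0"] by (simp add: comm_def)
  from comm_prod_sum_add[OF assms(1) this] show ?thesis
    using assms(2) by simp
qed

lemma unital_subring_zero: "unital_subring S \<Longrightarrow> 0 \<in> S"
  and unital_subring_one: "unital_subring S \<Longrightarrow> 1 \<in> S"
  and unital_subring_add: "unital_subring S \<Longrightarrow> x \<in> S \<Longrightarrow> y \<in> S \<Longrightarrow> x + y \<in> S"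
  and unital_subring_mult: "unital_subring S \<Longrightarrow> x \<in> S \<Longrightarrow> y \<in> S \<Longrightarrow> x * y \<in> S"
  and unital_subring_uminus: "unital_subring S \<Longrightarrow> x \<in> S \<Longrightarrow> - x \<in> S"
  by (simp_all add: unital_subring_def)

lemma unital_subring_comm: "unital_subring S \<Longrightarrow> x \<in> S \<Longrightarrow> y \<in> S \<Longrightarrow> comm x y \<in> S"
  using unital_subring_add[of S "x * y" "- (y * x)"] by (simp add: comm_def unital_subring_mult unital_subring_uminus)

lemma unital_subring_power: "unital_subring S \<Longrightarrow> x \<in> S \<Longrightarrow> x ^ k \<in> S"
  by (induction k) (simp_all add: unital_subring_one unital_subring_mult)

lemma unital_subring_sum:
  "unital_subring S \<Longrightarrow> (\<And>i. i < (k::nat) \<Longrightarrow> f i \<in> S) \<Longrightarrow> (\<Sum>i<k. f i) \<in> S"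
  by (induction k) (simp_all add: unital_subring_zero unital_subring_add)

lemma comm_comm_mult_eq:
  fixes x b y z :: "'a::ring_1"
  shows "comm x b * comm y b * z = comm x b * comm y (b * z) - comm x (b * b) * comm y z + comm (b * x) b * comm y z"
  by (simp add: comm_def algebra_simps)

lemma comm_prod_sum_comm_comm_mult:
  assumes S: "unital_subring S" and "x \<in> S" "b \<in> S" "y \<in> S" "z \<in> S"
  shows "comm_prod_sum S 3 (comm x b * comm y b * z)"
proof -
  have "comm_prod_sum S (1 + 1 + 1)
      (comm x b * comm y (b * z) - comm x (b * b) * comm y z + comm (b * x) b * comm y z)"
    using assms by (intro comm_prod_sum_add comm_prod_sum_diff comm_prod_sum_single unital_subring_mult)
  then show ?thesis by (simp add: comm_comm_mult_eq numeral_3_eq_3)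
qed

lemma comm_sandwich_eq:
  fixes X Y Z a b :: "'a::ring_1"
  shows "X * comm a b * Y * comm a b * Z = comm (X * a) b * comm (Y * a) b * Z
    - comm (X * a) b * comm Y b * (a * Z) - comm X b * comm (a * Y * a) b * Z
    + comm X b * comm (a * Y) b * (a * Z)"
  by (simp add: comm_def algebra_simps)

lemma comm_prod_sum_comm_sandwich:
  assumes S: "unital_subring S" and "X \<in> S" "Y \<in> S" "Z \<in> S" "a \<in> S" "b \<in> S"
  shows "comm_prod_sum S 12 (X * comm a b * Y * comm a b * Z)"
proof -
  have "comm_prod_sum S (3 + 3 + 3 + 3) (comm (X * a) b * comm (Y * a) b * Z
    - comm (X * a) b * comm Y b * (a * Z) - comm X b * comm (a * Y * a) b * Z
    + comm X b * comm (a * Y) b * (a * Z))"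
    using assms by (intro comm_prod_sum_add comm_prod_sum_diff comm_prod_sum_comm_comm_mult unital_subring_mult)
  then show ?thesis by (simp add: comm_sandwich_eq)
qed

definition biabsorbing :: "'a::ring_1 set \<Rightarrow> 'a set \<Rightarrow> bool" where
  "biabsorbing S K \<longleftrightarrow>
     0 \<in> K \<and> (\<forall>x\<in>K. \<forall>y\<in>K. x + y \<in> K) \<and> (\<forall>a\<in>S. \<forall>x\<in>K. a * x \<in> K \<and> x * a \<in> K)"

lemma biabsorbing_zero: "biabsorbing S K \<Longrightarrow> 0 \<in> K"
  and biabsorbing_add: "biabsorbing S K \<Longrightarrow> x \<in> K \<Longrightarrow> y \<in> K \<Longrightarrow> x + y \<in> K"
  and biabsorbing_mult_left: "biabsorbing S K \<Longrightarrow> a \<in> S \<Longrightarrow> x \<in> K \<Longrightarrow> a * x \<in> K"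
  and biabsorbing_mult_right: "biabsorbing S K \<Longrightarrow> a \<in> S \<Longrightarrow> x \<in> K \<Longrightarrow> x * a \<in> K"
  by (simp_all add: biabsorbing_def)

lemma biabsorbing_sum:
  "biabsorbing S K \<Longrightarrow> (\<And>i. i < (k::nat) \<Longrightarrow> f i \<in> K) \<Longrightarrow> (\<Sum>i<k. f i) \<in> K"
  by (induction k) (simp_all add: biabsorbing_zero biabsorbing_add)

text \<open>Every term of the expansion containing w twice lies in K, because w S w \<subseteq> K.\<close>
lemma power_add_mod_biabsorbing:
  assumes S: "unital_subring S" and K: "biabsorbing S K" and s: "s \<in> S" and w: "w \<in> S"
    and wSw: "\<And>X. X \<in> S \<Longrightarrow> w * X * w \<in> K"
  shows "\<exists>E\<in>K. (s + w) ^ N = s ^ N + (\<Sum>i<N. s ^ i * w * s ^ (N - Suc i)) + E"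
proof (induction N)
  case 0
  show ?case using biabsorbing_zero[OF K] by auto
next
  case (Suc N)
  then obtain E where E: "E \<in> K"
    and IH: "(s + w) ^ N = s ^ N + (\<Sum>i<N. s ^ i * w * s ^ (N - Suc i)) + E"
    by blast
  define E' where "E' = E * (s + w) + (\<Sum>i<N. s ^ i * (w * s ^ (N - Suc i) * w))"
  have "E' \<in> K"
    unfolding E'_def
    by (intro biabsorbing_add[OF K] biabsorbing_mult_right[OF K unital_subring_add[OF S s w] E]
        biabsorbing_sum[OF K] biabsorbing_mult_left[OF K unital_subring_power[OF S s]] wSw
        unital_subring_power[OF S s])
  have shift: "(\<Sum>i<N. s ^ i * w * s ^ (N - Suc i)) * s = (\<Sum>i<N. s ^ i * w * s ^ (Suc N - Suc i))"
    unfolding sum_distrib_right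
  proof (rule sum.cong)
    fix i assume "i \<in> {..<N}"
    then have "Suc N - Suc i = Suc (N - Suc i)" by auto
    then show "s ^ i * w * s ^ (N - Suc i) * s = s ^ i * w * s ^ (Suc N - Suc i)"
      by (simp add: mult.assoc power_Suc2 power_commutes)
  qed simp
  have "(s + w) ^ Suc N = (s ^ N + (\<Sum>i<N. s ^ i * w * s ^ (N - Suc i)) + E) * (s + w)"
    by (simp only: power_Suc2 IH)
  also have "\<dots> = s ^ N * s + (s ^ N * w + (\<Sum>i<N. s ^ i * w * s ^ (N - Suc i)) * s)
      + ((\<Sum>i<N. s ^ i * w * s ^ (N - Suc i)) * w + E * (s + w))"
    by (simp add: algebra_simps)
  also have "\<dots> = s ^ Suc N + (\<Sum>i<Suc N. s ^ i * w * s ^ (Suc N - Suc i)) + E'"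
    unfolding shift E'_def
    by (simp add: sum_distrib_right mult.assoc power_Suc2 power_commutes algebra_simps)
  finally show ?case using \<open>E' \<in> K\<close> by blast
qed

lemma power_add_double_mem_biabsorbing:
  assumes S: "unital_subring S" and K: "biabsorbing S K" and s: "s \<in> S" and w: "w \<in> S"
    and wSw: "\<And>X. X \<in> S \<Longrightarrow> w * X * w \<in> K" and sM: "s ^ M \<in> K"
  shows "(s + w) ^ (2 * M) \<in> K"
proof -
  obtain E where "E \<in> K"
    and expand: "(s + w) ^ (2 * M) = s ^ (2 * M) + (\<Sum>i<2 * M. s ^ i * w * s ^ (2 * M - Suc i)) + E"
    using power_add_mod_biabsorbing[OF S K s w wSw] by blast
  have "s ^ (2 * M) = s ^ M * s ^ M"
    by (simp add: mult_2 power_add)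
  then have "s ^ (2 * M) \<in> K"
    using biabsorbing_mult_right[OF K unital_subring_power[OF S s] sM] by simp
  moreover have "s ^ i * w * s ^ (2 * M - Suc i) \<in> K" if "i < 2 * M" for i
  proof (cases "M \<le> i")
    case True
    then have "s ^ i = s ^ M * s ^ (i - M)"
      by (simp flip: power_add)
    then have "s ^ i * w * s ^ (2 * M - Suc i) = s ^ M * (s ^ (i - M) * w * s ^ (2 * M - Suc i))"
      by (simp add: mult.assoc)
    then show ?thesis
      using S s w sM by (simp add: biabsorbing_mult_right[OF K] unital_subring_mult unital_subring_power)
  next
    case False
    then have "2 * M - Suc i = (M - Suc i) + M"
      using that by simp
    then have "s ^ (2 * M - Suc i) = s ^ (M - Suc i) * s ^ M"
      by (simp add: power_add)
    then have "s ^ i * w * s ^ (2 * M - Suc i) = (s ^ i * w * s ^ (M - Suc i)) * s ^ M"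
      by (simp add: mult.assoc)
    then show ?thesis
      using S s w sM by (simp add: biabsorbing_mult_left[OF K] unital_subring_mult unital_subring_power)
  qed
  ultimately show ?thesis
    unfolding expand using \<open>E \<in> K\<close> by (intro biabsorbing_add[OF K] biabsorbing_sum[OF K]) auto
qed

lemma sum_power_mem_biabsorbing:
  fixes m :: nat
  assumes S: "unital_subring S" and K: "biabsorbing S K"
    and w: "\<And>i. i < m \<Longrightarrow> w i \<in> S"
    and wSw: "\<And>i X. i < m \<Longrightarrow> X \<in> S \<Longrightarrow> w i * X * w i \<in> K"
  shows "\<exists>M. (\<Sum>i<m. w i) ^ M \<in> K"
  using w wSw
proof (induction m)
  case 0
  show ?case using biabsorbing_zero[OF K] by (intro exI[of _ 1]) simp
next
  case (Suc m)
  then obtain M where "(\<Sum>i<m. w i) ^ M \<in> K" by auto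
  moreover have "(\<Sum>i<m. w i) \<in> S"
    using Suc.prems by (intro unital_subring_sum[OF S]) auto
  ultimately have "((\<Sum>i<m. w i) + w m) ^ (2 * M) \<in> K"
    using Suc.prems by (intro power_add_double_mem_biabsorbing[OF S K]) auto
  then show ?case by auto
qed

definition bounded_sandwiches :: "'a::ring_1 set \<Rightarrow> 'a set" where
  "bounded_sandwiches S = {z. \<exists>N. \<forall>x\<in>S. \<forall>y\<in>S. comm_prod_sum S N (x * z * y)}"

lemma biabsorbing_bounded_sandwiches:
  assumes S: "unital_subring S"
  shows "biabsorbing S (bounded_sandwiches S)"
  unfolding biabsorbing_def
proof (intro conjI ballI)
  show "0 \<in> bounded_sandwiches S"
    unfolding bounded_sandwiches_def using comm_prod_sum_0 by auto
next
  fix z z' assume "z \<in> bounded_sandwiches S" "z' \<in> bounded_sandwiches S"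
  then obtain N N' where "\<forall>x\<in>S. \<forall>y\<in>S. comm_prod_sum S N (x * z * y)"
    and "\<forall>x\<in>S. \<forall>y\<in>S. comm_prod_sum S N' (x * z' * y)"
    unfolding bounded_sandwiches_def by blast
  then have "\<forall>x\<in>S. \<forall>y\<in>S. comm_prod_sum S (N + N') (x * (z + z') * y)"
    using comm_prod_sum_add by (fastforce simp: algebra_simps)
  then show "z + z' \<in> bounded_sandwiches S"
    unfolding bounded_sandwiches_def by blast
next
  fix a z assume a: "a \<in> S" and "z \<in> bounded_sandwiches S"
  then obtain N where N: "\<forall>x\<in>S. \<forall>y\<in>S. comm_prod_sum S N (x * z * y)"
    unfolding bounded_sandwiches_def by blast
  have "comm_prod_sum S N (x * (a * z) * y) \<and> comm_prod_sum S N (x * (z * a) * y)"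
    if "x \<in> S" "y \<in> S" for x y
    using N[rule_format, of "x * a" y] N[rule_format, of x "a * y"] that a S
    by (simp add: mult.assoc unital_subring_mult)
  then show "a * z \<in> bounded_sandwiches S" "z * a \<in> bounded_sandwiches S"
    unfolding bounded_sandwiches_def by blast+
qed

lemma comm_sandwich_mem_bounded_sandwiches:
  assumes S: "unital_subring S" and "a \<in> S" "b \<in> S" "w \<in> S"
  shows "comm a b * w * comm a b \<in> bounded_sandwiches S"
proof -
  have "comm_prod_sum S 12 (x * (comm a b * w * comm a b) * y)" if "x \<in> S" "y \<in> S" for x y
    using comm_prod_sum_comm_sandwich[OF S that(1) \<open>w \<in> S\<close> that(2) \<open>a \<in> S\<close> \<open>b \<in> S\<close>]
    by (simp add: mult.assoc)
  then show ?thesis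
    unfolding bounded_sandwiches_def by blast
qed

lemma one_mem_bounded_sandwiches:
  assumes S: "unital_subring S" and gen: "generated_by_commutators S"
  shows "1 \<in> bounded_sandwiches S"
proof -
  let ?K = "bounded_sandwiches S"
  have K: "biabsorbing S ?K"
    using S by (rule biabsorbing_bounded_sandwiches)
  have "1 \<in> commutator_ideal S"
    using gen unital_subring_one[OF S] by (simp add: generated_by_commutators_def)
  then obtain m :: nat and x a b y where xaby: "\<forall>i<m. x i \<in> S \<and> a i \<in> S \<and> b i \<in> S \<and> y i \<in> S"
    and one: "1 = (\<Sum>i<m. x i * comm (a i) (b i) * y i)"
    unfolding commutator_ideal_def by blast
  define w where "w i = x i * comm (a i) (b i) * y i" for i
  have "w i \<in> S" if "i < m" for i
    unfolding w_def using xaby that S by (auto intro!: unital_subring_mult unital_subring_comm)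
  moreover have "w i * X * w i \<in> ?K" if "i < m" "X \<in> S" for i X
  proof -
    have "comm (a i) (b i) * (y i * X * x i) * comm (a i) (b i) \<in> ?K"
      using xaby that S by (intro comm_sandwich_mem_bounded_sandwiches unital_subring_mult) auto
    then have "x i * (comm (a i) (b i) * (y i * X * x i) * comm (a i) (b i)) * y i \<in> ?K"
      using xaby that by (auto intro: biabsorbing_mult_right[OF K] biabsorbing_mult_left[OF K])
    then show ?thesis
      by (simp add: w_def mult.assoc)
  qed
  ultimately obtain M where "(\<Sum>i<m. w i) ^ M \<in> ?K"
    using sum_power_mem_biabsorbing[OF S K] by blast
  then show ?thesis
    by (simp add: w_def one[symmetric])
qed

lemma sum_of_comm_products_xi:
  assumes S: "unital_subring S" and gen: "generated_by_commutators S"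
  shows "sum_of_comm_products S (xi S)"
proof -
  obtain N where "\<forall>x\<in>S. \<forall>y\<in>S. comm_prod_sum S N (x * 1 * y)"
    using one_mem_bounded_sandwiches[OF S gen] unfolding bounded_sandwiches_def by blast
  then have "sum_of_comm_products S N"
    using unital_subring_one[OF S] by (auto simp: sum_of_comm_products_iff)
  then show ?thesis
    unfolding xi_def by (rule LeastI)
qed

lemma comm_sum_left: "comm (\<Sum>i<(k::nat). f i) y = (\<Sum>i<k. comm (f i) y)"
  and comm_sum_right: "comm x (\<Sum>i<(k::nat). f i) = (\<Sum>i<k. comm x (f i))"
  by (simp_all add: comm_def sum_distrib_left sum_distrib_right sum_subtractf)

lemma swap_diff_comm_prod_eq:
  fixes x y u d e :: "'a::ring_1"
  shows "x * u * comm d e * y - y * u * comm d e * x = u * comm (d * y) (e * x) - u * comm (d * x) (e * y)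
    + u * comm (d * e * x) y - u * comm (d * e * y) x + u * comm d (x * e * y - e * x * y - y * e * x + e * y * x)
    - comm u x * comm d (e * y) + comm (u * e) x * comm d y + comm u y * comm d (e * x) - comm (u * e) y * comm d x"
  by (simp add: comm_def algebra_simps)

lemma comm_prod_sum_swap_diff:
  fixes x y b c d e :: "'a::ring_1"
  shows "comm_prod_sum UNIV 9 (x * comm b c * comm d e * y - y * comm b c * comm d e * x)"
proof -
  let ?u = "comm b c"
  have "comm_prod_sum UNIV (1 + 1 + 1 + 1 + 1 + 1 + 1 + 1 + 1) (?u * comm (d * y) (e * x) - ?u * comm (d * x) (e * y)
    + ?u * comm (d * e * x) y - ?u * comm (d * e * y) x + ?u * comm d (x * e * y - e * x * y - y * e * x + e * y * x)
    - comm ?u x * comm d (e * y) + comm (?u * e) x * comm d y + comm ?u y * comm d (e * x) - comm (?u * e) y * comm d x)"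
    by (intro comm_prod_sum_add comm_prod_sum_diff comm_prod_sum_single UNIV_I)
  then show ?thesis
    by (simp add: swap_diff_comm_prod_eq eval_nat_numeral)
qed

text \<open>Insert 1 between x and y in x y - y x.\<close>
lemma comm_prod_sum_comm:
  fixes x y :: "'a::ring_1" and b c d e :: "nat \<Rightarrow> 'a"
  assumes one: "1 = (\<Sum>i<n. comm (b i) (c i) * comm (d i) (e i))"
  shows "comm_prod_sum UNIV (n * 9) (comm x y)"
proof -
  have "comm x y = x * 1 * y - y * 1 * x"
    by (simp add: comm_def)
  also have "\<dots> = (\<Sum>i<n. x * comm (b i) (c i) * comm (d i) (e i) * y
      - y * comm (b i) (c i) * comm (d i) (e i) * x)"
    unfolding one by (simp add: sum_distrib_left sum_distrib_right sum_subtractf mult.assoc)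
  finally show ?thesis
    by (simp add: comm_prod_sum_sum comm_prod_sum_swap_diff)
qed

lemma comm_minus_comm_prod_eq:
  fixes u d A B r :: "'a::ring_1"
  shows "comm (u * d * A * B + u * B * d * A) r - u * comm d (A * B) * r
    = u * comm A (B * d * r) + comm (u * d * A) r * B + comm (u * B * d) r * A + u * comm B (d * A * r)"
  by (simp add: comm_def algebra_simps)

lemma comm_prod_sum_comm_minus:
  fixes b c d r :: "'a::ring_1"
  assumes "comm_prod_sum UNIV m e"
  shows "\<exists>M. comm_prod_sum UNIV (m * 4) (comm M r - comm b c * comm d e * r)"
proof -
  obtain p q s t where e: "e = (\<Sum>j<m. comm (p j) (q j) * comm (s j) (t j))"
    using assms unfolding comm_prod_sum_def by blast
  let ?u = "comm b c" and ?A = "\<lambda>j. comm (p j) (q j)" and ?B = "\<lambda>j. comm (s j) (t j)"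
  let ?M = "\<lambda>j. ?u * d * ?A j * ?B j + ?u * ?B j * d * ?A j"
  have "comm_prod_sum UNIV 4 (comm (?M j) r - ?u * comm d (?A j * ?B j) * r)" for j
  proof -
    have "comm_prod_sum UNIV (1 + 1 + 1 + 1) (?u * comm (?A j) (?B j * d * r) + comm (?u * d * ?A j) r * ?B j
      + comm (?u * ?B j * d) r * ?A j + ?u * comm (?B j) (d * ?A j * r))"
      by (intro comm_prod_sum_add comm_prod_sum_single UNIV_I)
    then show ?thesis
      unfolding comm_minus_comm_prod_eq by (simp add: eval_nat_numeral)
  qed
  then have "comm_prod_sum UNIV (m * 4) (\<Sum>j<m. comm (?M j) r - ?u * comm d (?A j * ?B j) * r)"
    by (rule comm_prod_sum_sum)
  also have "(\<Sum>j<m. comm (?M j) r - ?u * comm d (?A j * ?B j) * r)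
      = comm (\<Sum>j<m. ?M j) r - ?u * comm d e * r"
    unfolding e comm_sum_left comm_sum_right by (simp add: sum_distrib_left sum_distrib_right sum_subtractf)
  finally show ?thesis
    by blast
qed

lemma comm_prod_sum_every_element:
  fixes b c d e :: "nat \<Rightarrow> 'a::ring_1" and r :: 'a
  assumes one: "1 = (\<Sum>i<n. comm (b i) (c i) * comm (d i) (e i))"
    and e: "\<And>i. i < n \<Longrightarrow> comm_prod_sum UNIV m (e i)"
  shows "comm_prod_sum UNIV (n * 9 + n * (m * 4)) r"
proof -
  let ?t = "\<lambda>i. comm (b i) (c i) * comm (d i) (e i) * r"
  have "\<forall>i<n. \<exists>M. comm_prod_sum UNIV (m * 4) (comm M r - ?t i)"
    using comm_prod_sum_comm_minus[OF e] by blast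
  then obtain M where M: "\<And>i. i < n \<Longrightarrow> comm_prod_sum UNIV (m * 4) (comm (M i) r - ?t i)"
    by metis
  have "(\<Sum>i<n. ?t i) = r"
    unfolding sum_distrib_right[symmetric] one[symmetric] by simp
  then have "r = comm (\<Sum>i<n. M i) r - (\<Sum>i<n. comm (M i) r - ?t i)"
    by (simp add: comm_sum_left sum_subtractf)
  also have "comm_prod_sum UNIV (n * 9 + n * (m * 4)) \<dots>"
    by (intro comm_prod_sum_diff comm_prod_sum_comm[OF one] comm_prod_sum_sum M)
  finally show ?thesis .
qed

lemma linear_plus_square_le_cube: "n * 9 + n * (n * 4) \<le> 15 * n ^ 3" for n :: nat
proof (cases "n = 0")
  case False
  then have "n ^ 1 \<le> n ^ 3" "n ^ 2 \<le> n ^ 3"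
    by (simp_all only: power_increasing)
  then show ?thesis
    by (simp add: power2_eq_square)
qed simp

theorem proposition5p12:
  fixes S :: "'a::ring_1 set"
  assumes "unital_subring S"
    and "generated_by_commutators S"
  shows "sum_of_comm_products (UNIV :: 'a set) (15 * xi S ^ 3)
         \<and> xi (UNIV :: 'a set) \<le> 15 * xi S ^ 3"
proof -
  let ?n = "xi S"
  have soc: "sum_of_comm_products S ?n"
    using assms by (rule sum_of_comm_products_xi)
  then obtain b c d e where bcde: "\<forall>i<?n. b i \<in> S \<and> c i \<in> S \<and> d i \<in> S \<and> e i \<in> S"
    and one: "1 = (\<Sum>i<?n. comm (b i) (c i) * comm (d i) (e i))"
    using unital_subring_one[OF assms(1)] unfolding sum_of_comm_products_def by blast
  have "comm_prod_sum UNIV ?n (e i)" if "i < ?n" for i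
    using soc bcde that by (auto simp: sum_of_comm_products_iff intro: comm_prod_sum_subset)
  then have "comm_prod_sum UNIV (?n * 9 + ?n * (?n * 4)) r" for r :: 'a
    by (rule comm_prod_sum_every_element[OF one])
  then have "sum_of_comm_products (UNIV :: 'a set) (15 * ?n ^ 3)"
    using linear_plus_square_le_cube by (auto simp: sum_of_comm_products_iff intro: comm_prod_sum_mono)
  then show ?thesis
    unfolding xi_def[of UNIV] by (auto intro: Least_le)
qed

end
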